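(* Let $n\geqslant 1$ and consider the first-quadrant spectral sequence $E^1_{k,l}=H_l(EW_n\times_{W_n}\mathcal{D}^n_k)\Rightarrow H_{k+l}(\|EW_n\times_{W_n}\mathcal{D}^n\|)$ arising from the skeletal filtration, with $d^1=\sum_{i=0}^k(-1)^i(d_i)_\ast$; thus $E^1_{k,l}\cong H_l(BW_{n-k-1})$ for $0\leqslant k\leqslant n$ (and $0$ for $k>n$), and $d^1:E^1_{k,l}\to E^1_{k-1,l}$ is the stabilization map $H_l(BW_{n-k-1})\to H_l(BW_{n-k})$ when $k$ is even and $k\geqslant 2$, and zero when $k$ is odd. Assume that for all $m<n$ the stabilization map $H_l(BW_{m-1})\to H_l(BW_m)$ is an isomorphism whenever $2l\leqslant m$. Then (1) $E^\infty_{0,l}=E^2_{0,l}=E^1_{0,l}$ for $2l\leqslant n$, and (2) $E^\infty_{k,l}=0$ whenever $k>0$ and $2(k+l)\leqslant n$.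
   Context: Standing setup: $\Gamma_1$ is an arbitrary finite Coxeter diagram with a preferred vertex $s_1$ (edge $\{s,t\}$ iff $m_{st}\geqslant3$; unlabelled edge means $m_{st}=3$, no edge means $m_{st}=2$). For $n\geqslant 2$, $\Gamma_n$ is obtained from $\Gamma_{n-1}$ by adding one new vertex $s_n$ joined by an unlabelled edge to $s_{n-1}$ and to no other vertex. $\Gamma_0$ is $\Gamma_1$ with $s_1$ deleted; $\Gamma_{-1}$ is $\Gamma_1$ with $s_1$ and all its neighbours deleted. For $n\geqslant -1$, $S_n$ is the vertex set of $\Gamma_n$ and $W_n$ the Coxeter group; $W_m$ ($m\leqslant n$) is the standard parabolic subgroup of $W_n$ generated by $S_m$, and stabilization maps are induced by these inclusions. $\mathcal{D}^n$ is the semisimplicial set with $\mathcal{D}^n_k=W_n/W_{n-k-1}$ for $0\leqslant k\leqslant n$, $\mathcal{D}^n_k=\emptyset$ for $k>n$, and face maps $d_i(cW_{n-k-1})=c(s_{n-k+i}\cdots s_{n-k+1})W_{n-k}$ (empty product for $i=0$). $EW_n\times_{W_n}\mathcal{D}^n$ is the semisimplicial space with $k$-th space $EW_n\times_{W_n}\mathcal{D}^n_k$; $\|\cdot\|$ is geometric realisation. Homology is with arbitrary constant coefficients. *)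

theory Defs
  imports "HOL-Algebra.Algebra"
begin

definition first_quadrant_homological_SS ::
  "(nat \<Rightarrow> int \<Rightarrow> int \<Rightarrow> 'a monoid) \<Rightarrow> (nat \<Rightarrow> int \<Rightarrow> int \<Rightarrow> 'a \<Rightarrow> 'a) \<Rightarrow> bool" where
  "first_quadrant_homological_SS E d \<longleftrightarrow>
     (\<forall>r\<ge>1. \<forall>k l.
        comm_group (E r k l)
      \<and> d r k l \<in> hom (E r k l) (E r (k - int r) (l + int r - 1))
      \<and> (\<forall>x\<in>carrier (E r k l).
            d r (k - int r) (l + int r - 1) (d r k l x)
              = \<one>\<^bsub>E r (k - 2 * int r) (l + 2 * int r - 2)\<^esub>)
      \<and> E (Suc r) k l \<cong>
          (subgroup_generated (E r k l)
              (kernel (E r k l) (E r (k - int r) (l + int r - 1)) (d r k l)))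
          Mod (d r (k + int r) (l - int r + 1) ` carrier (E r (k + int r) (l - int r + 1))))
   \<and> (\<forall>k l. (k < 0 \<or> l < 0) \<longrightarrow> carrier (E 1 k l) = {\<one>\<^bsub>E 1 k l\<^esub>})"

end

theory Submission
  imports Defs
begin

text \<open>On the first page the odd columns have zero outgoing \<open>d\<^sup>1\<close>, while in the stable range the
  incoming \<open>d\<^sup>1\<close> from the next column is a stabilization isomorphism, hence surjective; the even
  columns \<open>k \<ge> 2\<close> have injective outgoing \<open>d\<^sup>1\<close>. So \<open>E\<^sup>2\<^sub>k\<^sub>,\<^sub>l = 0\<close> for \<open>k \<ge> 1\<close> whenever
  \<open>2l + k + (k mod 2) \<le> n\<close>, and zero groups stay zero on all later pages. Every differential \<open>d\<^sup>r\<close>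
  with \<open>r \<ge> 2\<close> into column 0 at a height \<open>l\<close> with \<open>2l \<le> n\<close> starts inside this range, and \<open>d\<^sup>1\<close> into
  column 0 comes from the odd column 1.\<close>

lemma iso_carrier_trivial:
  assumes "G \<cong> Q" "monoid G" "carrier Q \<subseteq> {c}"
  shows "carrier G = {\<one>\<^bsub>G\<^esub>}"
proof -
  obtain h where h: "bij_betw h (carrier G) (carrier Q)"
    using assms(1) unfolding is_iso_def iso_def by blast
  have one: "\<one>\<^bsub>G\<^esub> \<in> carrier G"
    using assms(2) by (rule monoid.one_closed)
  have "x = \<one>\<^bsub>G\<^esub>" if "x \<in> carrier G" for x
  proof -
    have "h x = h \<one>\<^bsub>G\<^esub>"
      using h that one assms(3) by (auto dest!: bij_betwE)
    then show ?thesis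
      using h that one by (auto simp: bij_betw_def dest: inj_onD)
  qed
  then show ?thesis using one by blast
qed

lemma (in group) carrier_FactGroup_subgroup_generated_subset:
  assumes "subgroup N G" "K \<subseteq> N"
  shows "carrier (subgroup_generated G K Mod N) \<subseteq> {N}"
proof -
  have "carrier (subgroup_generated G K) \<subseteq> N"
    using subgroup_generated_minimal assms by blast
  moreover have "N #>\<^bsub>subgroup_generated G K\<^esub> x = N" if "x \<in> N" for x
    using subgroup.rcos_const[OF assms(1) is_group that] by (simp add: r_coset_def)
  ultimately show ?thesis
    by (auto simp: carrier_FactGroup)
qed

locale first_quadrant_SS =
  fixes E :: "nat \<Rightarrow> int \<Rightarrow> int \<Rightarrow> 'a monoid"
    and d :: "nat \<Rightarrow> int \<Rightarrow> int \<Rightarrow> 'a \<Rightarrow> 'a"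
  assumes SS: "first_quadrant_homological_SS E d"
begin

lemma group_page: "r \<ge> 1 \<Longrightarrow> group (E r k l)"
  using SS comm_group.axioms(2) unfolding first_quadrant_homological_SS_def by blast

lemma group_hom_differential:
  "r \<ge> 1 \<Longrightarrow> group_hom (E r k l) (E r (k - int r) (l + int r - 1)) (d r k l)"
  using SS group_page unfolding first_quadrant_homological_SS_def
  by (simp add: group_hom_def group_hom_axioms_def)

lemma page_trivial_outside_quadrant:
  "k < 0 \<or> l < 0 \<Longrightarrow> carrier (E 1 k l) = {\<one>\<^bsub>E 1 k l\<^esub>}"
  using SS unfolding first_quadrant_homological_SS_def by blast

lemma next_page_trivial_if_exact:
  assumes r: "r \<ge> 1"
    and exact: "kernel (E r k l) (E r (k - int r) (l + int r - 1)) (d r k l)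
                  \<subseteq> d r (k + int r) (l - int r + 1) ` carrier (E r (k + int r) (l - int r + 1))"
  shows "carrier (E (Suc r) k l) = {\<one>\<^bsub>E (Suc r) k l\<^esub>}"
proof -
  let ?K = "kernel (E r k l) (E r (k - int r) (l + int r - 1)) (d r k l)"
  let ?N = "d r (k + int r) (l - int r + 1) ` carrier (E r (k + int r) (l - int r + 1))"
  have "subgroup ?N (E r k l)"
    using group_hom.img_is_subgroup[OF group_hom_differential[OF r, of "k + int r" "l - int r + 1"]]
    by simp
  then have homology_trivial: "carrier (subgroup_generated (E r k l) ?K Mod ?N) \<subseteq> {?N}"
    using group.carrier_FactGroup_subgroup_generated_subset[OF group_page[OF r]] exact by blast
  have "E (Suc r) k l \<cong> subgroup_generated (E r k l) ?K Mod ?N"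
    using SS r unfolding first_quadrant_homological_SS_def by blast
  moreover have "monoid (E (Suc r) k l)"
    using group.is_monoid[OF group_page[of "Suc r"]] by simp
  ultimately show ?thesis
    using homology_trivial by (rule iso_carrier_trivial)
qed

lemma next_page_trivial:
  assumes "r \<ge> 1" "carrier (E r k l) = {\<one>\<^bsub>E r k l\<^esub>}"
  shows "carrier (E (Suc r) k l) = {\<one>\<^bsub>E (Suc r) k l\<^esub>}"
proof (rule next_page_trivial_if_exact[OF assms(1)])
  interpret into: group_hom "E r (k + int r) (l - int r + 1)" "E r k l" "d r (k + int r) (l - int r + 1)"
    using group_hom_differential[OF assms(1), of "k + int r" "l - int r + 1"] by simp
  show "kernel (E r k l) (E r (k - int r) (l + int r - 1)) (d r k l)
          \<subseteq> d r (k + int r) (l - int r + 1) ` carrier (E r (k + int r) (l - int r + 1))"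
    using assms(2) into.hom_one into.G.one_closed by (force simp: kernel_def)
qed

lemma later_page_trivial:
  assumes "1 \<le> r0" "r0 \<le> r" "carrier (E r0 k l) = {\<one>\<^bsub>E r0 k l\<^esub>}"
  shows "carrier (E r k l) = {\<one>\<^bsub>E r k l\<^esub>}"
  using assms(2,1,3) by (induction r rule: dec_induct) (simp_all add: next_page_trivial)

lemma differential_from_trivial:
  assumes "r \<ge> 1" "carrier (E r k l) = {\<one>\<^bsub>E r k l\<^esub>}" "x \<in> carrier (E r k l)"
  shows "d r k l x = \<one>\<^bsub>E r (k - int r) (l + int r - 1)\<^esub>"
  using assms group_hom.hom_one[OF group_hom_differential] by auto

end

text \<open>The spectral sequence of the paper, with \<open>E\<^sup>1\<^sub>k\<^sub>,\<^sub>l = H\<^sub>l(BW\<^sub>n\<^sub>-\<^sub>k\<^sub>-\<^sub>1) = H (n - k - 1) l\<close> and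
  \<open>s m l : H (m - 1) l \<rightarrow> H m l\<close> the stabilization maps.\<close>

locale stable_range_SS = first_quadrant_SS E d
  for E :: "nat \<Rightarrow> int \<Rightarrow> int \<Rightarrow> 'a monoid" and d +
  fixes n :: nat
    and H :: "int \<Rightarrow> int \<Rightarrow> 'a monoid"
    and s :: "int \<Rightarrow> int \<Rightarrow> 'a \<Rightarrow> 'a"
  assumes E1: "\<forall>k l. 0 \<le> k \<and> k \<le> int n \<and> 0 \<le> l \<longrightarrow> E 1 k l = H (int n - k - 1) l"
    and d1_even: "\<forall>k l. 2 \<le> k \<and> k \<le> int n \<and> even k \<and> 0 \<le> l \<longrightarrow>
                    (\<forall>x\<in>carrier (E 1 k l). d 1 k l x = s (int n - k) l x)"
    and d1_odd: "\<forall>k l. odd k \<longrightarrow> (\<forall>x\<in>carrier (E 1 k l). d 1 k l x = \<one>\<^bsub>E 1 (k - 1) l\<^esub>)"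
    and stab_iso: "\<forall>m l. 0 \<le> m \<and> m < int n \<and> 0 \<le> l \<and> 2 * l \<le> m \<longrightarrow>
                    s m l \<in> iso (H (m - 1) l) (H m l)"
begin

lemma E2_trivial_odd_column:
  assumes "odd k" "1 \<le> k" "0 \<le> l" "2 * l + k + 1 \<le> int n"
  shows "carrier (E 2 k l) = {\<one>\<^bsub>E 2 k l\<^esub>}"
proof -
  let ?m = "int n - k - 1"
  have source: "E 1 (k + 1) l = H (?m - 1) l"
    using E1[rule_format, of "k + 1" l] assms by (simp add: diff_diff_eq)
  have target: "E 1 k l = H ?m l"
    using E1 assms by simp
  have incoming: "\<And>x. x \<in> carrier (E 1 (k + 1) l) \<Longrightarrow> d 1 (k + 1) l x = s ?m l x"
    using d1_even[rule_format, of "k + 1" l] assms by (simp add: diff_diff_eq)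
  have "s ?m l \<in> iso (H (?m - 1) l) (H ?m l)"
    by (intro stab_iso[rule_format]) (use assms in auto)
  then have "s ?m l ` carrier (E 1 (k + 1) l) = carrier (E 1 k l)"
    unfolding source target iso_def bij_betw_def by blast
  then have "d 1 (k + 1) l ` carrier (E 1 (k + 1) l) = carrier (E 1 k l)"
    using incoming image_cong by metis
  then have "carrier (E (Suc 1) k l) = {\<one>\<^bsub>E (Suc 1) k l\<^esub>}"
    by (intro next_page_trivial_if_exact) (auto simp: kernel_def)
  then show ?thesis by (simp add: numeral_2_eq_2)
qed

lemma E2_trivial_even_column:
  assumes "even k" "2 \<le> k" "0 \<le> l" "2 * l + k \<le> int n"
  shows "carrier (E 2 k l) = {\<one>\<^bsub>E 2 k l\<^esub>}"
proof -
  let ?m = "int n - k"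
  interpret out: group_hom "E 1 k l" "E 1 (k - 1) l" "d 1 k l"
    using group_hom_differential[of 1 k l] by simp
  interpret into: group_hom "E 1 (k + 1) l" "E 1 k l" "d 1 (k + 1) l"
    using group_hom_differential[of 1 "k + 1" l] by simp
  have source: "E 1 k l = H (?m - 1) l"
    using E1 assms by simp
  have outgoing: "\<And>x. x \<in> carrier (E 1 k l) \<Longrightarrow> d 1 k l x = s ?m l x"
    using d1_even assms by simp
  have "s ?m l \<in> iso (H (?m - 1) l) (H ?m l)"
    by (intro stab_iso[rule_format]) (use assms in auto)
  then have "inj_on (s ?m l) (carrier (E 1 k l))"
    unfolding source iso_def bij_betw_def by blast
  then have "inj_on (d 1 k l) (carrier (E 1 k l))"
    using outgoing inj_on_cong by metis
  then have "kernel (E 1 k l) (E 1 (k - 1) l) (d 1 k l) = {\<one>\<^bsub>E 1 k l\<^esub>}"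
    using out.inj_iff_trivial_ker by simp
  moreover have "\<one>\<^bsub>E 1 k l\<^esub> \<in> d 1 (k + 1) l ` carrier (E 1 (k + 1) l)"
    using into.hom_one into.G.one_closed by (metis image_eqI)
  ultimately have "carrier (E (Suc 1) k l) = {\<one>\<^bsub>E (Suc 1) k l\<^esub>}"
    by (intro next_page_trivial_if_exact) simp_all
  then show ?thesis by (simp add: numeral_2_eq_2)
qed

lemma page_trivial_in_stable_range:
  assumes "r \<ge> 2" "1 \<le> k" "2 * l + k + k mod 2 \<le> int n"
  shows "carrier (E r k l) = {\<one>\<^bsub>E r k l\<^esub>}"
proof (cases "l < 0")
  case True
  then show ?thesis
    using later_page_trivial[of 1 r k l] page_trivial_outside_quadrant[of k l] assms(1) by simp
next
  case False
  have "carrier (E 2 k l) = {\<one>\<^bsub>E 2 k l\<^esub>}"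
  proof (cases "even k")
    case True
    then have "2 \<le> k" using assms(2) by presburger
    then show ?thesis
      using E2_trivial_even_column True False assms(3) by simp
  next
    case odd: False
    then show ?thesis
      using E2_trivial_odd_column False assms(2,3) by (simp add: odd_iff_mod_2_eq_one)
  qed
  then show ?thesis
    using later_page_trivial[of 2 r k l] assms(1) by simp
qed

lemma differential_into_bottom_row_trivial:
  assumes "0 \<le> l" "2 * l \<le> int n" "r \<ge> 1" "x \<in> carrier (E r (int r) (l - int r + 1))"
  shows "d r (int r) (l - int r + 1) x = \<one>\<^bsub>E r 0 l\<^esub>"
proof (cases "r = 1")
  case True
  then show ?thesis using d1_odd assms(4) by simp
next
  case False
  have "int r mod 2 \<le> int r - 2"
    using False assms(3) by presburger
  then have "2 * (l - int r + 1) + int r + int r mod 2 \<le> int n"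
    using assms(2) by (simp add: algebra_simps)
  then have "carrier (E r (int r) (l - int r + 1)) = {\<one>\<^bsub>E r (int r) (l - int r + 1)\<^esub>}"
    using page_trivial_in_stable_range False assms(3) by simp
  then show ?thesis
    using differential_from_trivial assms(3,4) by simp
qed

end

theorem lemma9p3:
  fixes n :: nat
    and E :: "nat \<Rightarrow> int \<Rightarrow> int \<Rightarrow> 'a monoid"
    and d :: "nat \<Rightarrow> int \<Rightarrow> int \<Rightarrow> 'a \<Rightarrow> 'a"
    and H :: "int \<Rightarrow> int \<Rightarrow> 'a monoid"
    and s :: "int \<Rightarrow> int \<Rightarrow> 'a \<Rightarrow> 'a"
  assumes n_ge: "n \<ge> 1"
    and SS: "first_quadrant_homological_SS E d"
    and E1: "\<forall>k l. 0 \<le> k \<and> k \<le> int n \<and> 0 \<le> l \<longrightarrow> E 1 k l = H (int n - k - 1) l"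
    and E1_top: "\<forall>k l. k > int n \<longrightarrow> carrier (E 1 k l) = {\<one>\<^bsub>E 1 k l\<^esub>}"
    and stab_hom: "\<forall>m l. 0 \<le> m \<and> m \<le> int n \<and> 0 \<le> l \<longrightarrow> s m l \<in> hom (H (m - 1) l) (H m l)"
    and d1_even: "\<forall>k l. 2 \<le> k \<and> k \<le> int n \<and> even k \<and> 0 \<le> l \<longrightarrow>
                    (\<forall>x\<in>carrier (E 1 k l). d 1 k l x = s (int n - k) l x)"
    and d1_odd: "\<forall>k l. odd k \<longrightarrow> (\<forall>x\<in>carrier (E 1 k l). d 1 k l x = \<one>\<^bsub>E 1 (k - 1) l\<^esub>)"
    and stab_iso: "\<forall>m l. 0 \<le> m \<and> m < int n \<and> 0 \<le> l \<and> 2 * l \<le> m \<longrightarrow>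
                    s m l \<in> iso (H (m - 1) l) (H m l)"
  shows "(\<forall>l. 0 \<le> l \<and> 2 * l \<le> int n \<longrightarrow>
            (\<forall>r\<ge>1. \<forall>x\<in>carrier (E r (int r) (l - int r + 1)).
                 d r (int r) (l - int r + 1) x = \<one>\<^bsub>E r 0 l\<^esub>))
       \<and> (\<forall>k l. 0 < k \<and> 2 * (k + l) \<le> int n \<longrightarrow>
            (\<exists>r0. \<forall>r\<ge>r0. carrier (E r k l) = {\<one>\<^bsub>E r k l\<^esub>}))"
proof -
  interpret stable_range_SS E d n H s
    using SS E1 d1_even d1_odd stab_iso by unfold_locales
  have stable: "2 * l + k + k mod 2 \<le> int n" if "0 < k" "2 * (k + l) \<le> int n" for k l
    using that by (cases "even k") (auto simp: odd_iff_mod_2_eq_one)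
  show ?thesis
  proof (intro conjI allI impI ballI)
    show "d r (int r) (l - int r + 1) x = \<one>\<^bsub>E r 0 l\<^esub>"
      if "0 \<le> l \<and> 2 * l \<le> int n" "1 \<le> r" "x \<in> carrier (E r (int r) (l - int r + 1))"
      for l r x
      using differential_into_bottom_row_trivial that by blast
    show "\<exists>r0. \<forall>r\<ge>r0. carrier (E r k l) = {\<one>\<^bsub>E r k l\<^esub>}"
      if "0 < k \<and> 2 * (k + l) \<le> int n" for k l
    proof (intro exI allI impI)
      show "carrier (E r k l) = {\<one>\<^bsub>E r k l\<^esub>}" if "r \<ge> 2" for r
        using page_trivial_in_stable_range[OF that] stable \<open>0 < k \<and> 2 * (k + l) \<le> int n\<close> by simp
    qed
  qed
qed

end
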